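(* Let $S=\langle P,\varphi\rangle$ be a SUT model, $t$ a strength and $N\ge 1$ an integer. The propositional formula $Sat_{CX}^{N,t,S}=X\wedge C\wedge CX\wedge SUTX$ (defined in the context) is satisfiable if and only if a covering array $CA(N;t,S)$ exists.
   Context: A SUT model is $S=\langle P,\varphi\rangle$, where $P$ is a finite set of parameters, each $p\in P$ having a finite nonempty domain $d(p)$, and $\varphi$ is a propositional formula whose atoms have the form $(p=v)$ with $p\in P$, $v\in d(p)$. A test case is a full assignment $A$ giving each $p\in P$ a value in $d(p)$ such that $\varphi$ evaluates to true when each atom $(p=v)$ is read as true iff $A(p)=v$; it is assumed that at least one test case exists. Fix a strength $t$ with $1\le t\le |P|$. A $t$-tuple is an assignment of values (from their domains) to exactly $t$ distinct parameters, viewed as a set of pairs $(p,v)$. A test case covers a $t$-tuple $\tau$ if it assigns $v$ to $p$ for every $(p,v)\in\tau$. A $t$-tuple is allowed if some test case covers it (forbidden otherwise); $\mathcal{T}_a$ denotes the set of allowed $t$-tuples. A covering array $CA(N;t,S)$ is a list of $N$ test cases (repetitions allowed) such that every allowed $t$-tuple is covered by at least one of them. Write $[N]=\{1,\dots,N\}$. Propositional variables: $x_{i,p,v}$ for $i\in[N]$, $p\in P$, $v\in d(p)$ (meaning "test $i$ assigns $v$ to $p$"), and $c^i_\tau$ for $i\in[N]$, $\tau\in\mathcal T_a$. Constraints (each read as a Boolean constraint; any CNF translation, possibly with auxiliary variables, preserving satisfiability may be used): (X) for every $i\in[N]$ and $p\in P$: exactly one of $\{x_{i,p,v}: v\in d(p)\}$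 is true; (SUTX) for every $i\in[N]$: the formula $\varphi_i$ obtained from $\varphi$ by replacing every atom $(p=v)$ with $x_{i,p,v}$; (CX) for every $i\in[N]$, $\tau\in\mathcal T_a$, $(p,v)\in\tau$: $c^i_\tau\rightarrow x_{i,p,v}$; (C) for every $\tau\in\mathcal T_a$: $\bigvee_{i\in[N]} c^i_\tau$. *)

theory Defs
  imports Main
begin

datatype 'a pform =
    Atom 'a
  | PTrue
  | PFalse
  | PNot "'a pform"
  | PAnd "'a pform" "'a pform"
  | POr "'a pform" "'a pform"
  | PImp "'a pform" "'a pform"
  | Conj "'a pform list"
  | Disj "'a pform list"

fun peval :: "('a \<Rightarrow> bool) \<Rightarrow> 'a pform \<Rightarrow> bool" where
  "peval \<alpha> (Atom a) = \<alpha> a"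
| "peval \<alpha> PTrue = True"
| "peval \<alpha> PFalse = False"
| "peval \<alpha> (PNot f) = (\<not> peval \<alpha> f)"
| "peval \<alpha> (PAnd f g) = (peval \<alpha> f \<and> peval \<alpha> g)"
| "peval \<alpha> (POr f g) = (peval \<alpha> f \<or> peval \<alpha> g)"
| "peval \<alpha> (PImp f g) = (peval \<alpha> f \<longrightarrow> peval \<alpha> g)"
| "peval \<alpha> (Conj fs) = (\<forall>f\<in>set fs. peval \<alpha> f)"
| "peval \<alpha> (Disj fs) = (\<exists>f\<in>set fs. peval \<alpha> f)"

definition satisfiable :: "'a pform \<Rightarrow> bool" where
  "satisfiable f \<longleftrightarrow> (\<exists>\<alpha>. peval \<alpha> f)"

definition exactly_one :: "'a pform list \<Rightarrow> 'a pform" where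
  "exactly_one fs = PAnd (Disj fs)
     (Conj [PNot (PAnd (fs ! j) (fs ! k)). j \<leftarrow> [0..<length fs], k \<leftarrow> [0..<length fs], j < k])"

definition list_of :: "'a set \<Rightarrow> 'a list" where
  "list_of A = (SOME xs. set xs = A \<and> distinct xs)"

text \<open>A SUT model: a parameter set P, domains d, and a constraint formula phi
  whose atoms (p,v) stand for (p = v).\<close>
definition sut_model :: "'p set \<Rightarrow> ('p \<Rightarrow> 'v set) \<Rightarrow> ('p \<times> 'v) pform \<Rightarrow> bool" where
  "sut_model P d phi \<longleftrightarrow> finite P \<and> (\<forall>p\<in>P. finite (d p) \<and> d p \<noteq> {})
     \<and> set_pform phi \<subseteq> Sigma P d"

definition test_case :: "'p set \<Rightarrow> ('p \<Rightarrow> 'v set) \<Rightarrow> ('p \<times> 'v) pform \<Rightarrow> ('p \<Rightarrow> 'v) \<Rightarrow> bool" where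
  "test_case P d phi A \<longleftrightarrow> (\<forall>p\<in>P. A p \<in> d p) \<and> peval (\<lambda>(p, v). A p = v) phi"

text \<open>A t-tuple: assignment of domain values to exactly t distinct parameters,
  viewed as a set of pairs.\<close>
definition t_tuple :: "'p set \<Rightarrow> ('p \<Rightarrow> 'v set) \<Rightarrow> nat \<Rightarrow> ('p \<times> 'v) set \<Rightarrow> bool" where
  "t_tuple P d t \<tau> \<longleftrightarrow> \<tau> \<subseteq> Sigma P d \<and> finite \<tau> \<and> card \<tau> = t \<and> card (fst ` \<tau>) = t"

definition covers :: "('p \<Rightarrow> 'v) \<Rightarrow> ('p \<times> 'v) set \<Rightarrow> bool" where
  "covers A \<tau> \<longleftrightarrow> (\<forall>(p, v)\<in>\<tau>. A p = v)"

definition allowed_tuples :: "'p set \<Rightarrow> ('p \<Rightarrow> 'v set) \<Rightarrow> ('p \<times> 'v) pform \<Rightarrow> nat \<Rightarrow> ('p \<times> 'v) set set" where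
  "allowed_tuples P d phi t = {\<tau>. t_tuple P d t \<tau> \<and> (\<exists>A. test_case P d phi A \<and> covers A \<tau>)}"

definition covering_array :: "nat \<Rightarrow> nat \<Rightarrow> 'p set \<Rightarrow> ('p \<Rightarrow> 'v set) \<Rightarrow> ('p \<times> 'v) pform \<Rightarrow> ('p \<Rightarrow> 'v) list \<Rightarrow> bool" where
  "covering_array N t P d phi As \<longleftrightarrow> length As = N \<and> (\<forall>A\<in>set As. test_case P d phi A)
     \<and> (\<forall>\<tau>\<in>allowed_tuples P d phi t. \<exists>A\<in>set As. covers A \<tau>)"

datatype ('p, 'v) cvar = X nat 'p 'v | C nat "('p \<times> 'v) set"

definition Sat_CX :: "nat \<Rightarrow> nat \<Rightarrow> 'p set \<Rightarrow> ('p \<Rightarrow> 'v set) \<Rightarrow> ('p \<times> 'v) pform \<Rightarrow> ('p, 'v) cvar pform" where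
  "Sat_CX N t P d phi =
    (let Ns = [1..<Suc N]; Ta = list_of (allowed_tuples P d phi t) in
     Conj [
       \<comment> \<open>(X)\<close>
       Conj [exactly_one [Atom (X i p v). v \<leftarrow> list_of (d p)]. i \<leftarrow> Ns, p \<leftarrow> list_of P],
       \<comment> \<open>(C)\<close>
       Conj [Disj [Atom (C i \<tau>). i \<leftarrow> Ns]. \<tau> \<leftarrow> Ta],
       \<comment> \<open>(CX)\<close>
       Conj [PImp (Atom (C i \<tau>)) (Atom (X i (fst pv) (snd pv))). i \<leftarrow> Ns, \<tau> \<leftarrow> Ta, pv \<leftarrow> list_of \<tau>],
       \<comment> \<open>(SUTX)\<close>
       Conj [map_pform (\<lambda>(p, v). X i p v) phi. i \<leftarrow> Ns]])"

end

(* A model of Sat_CX is read row by row: by (X) the variables x_{i,p,v} define a total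
   assignment for each i, by (SUTX) that assignment is a test case, and by (C) and (CX) every
   allowed tuple is covered by a row i with c^i_tau true. Conversely, a covering array yields
   the model that sets x_{i,p,v} according to row i and c^i_tau iff row i covers tau. *)

theory Submission
  imports Defs
begin

lemma peval_map_pform: "peval \<alpha> (map_pform f \<phi>) = peval (\<alpha> \<circ> f) \<phi>"
  by (induction \<phi>) auto

lemma peval_cong: "(\<And>a. a \<in> set_pform \<phi> \<Longrightarrow> \<alpha> a = \<beta> a) \<Longrightarrow> peval \<alpha> \<phi> = peval \<beta> \<phi>"
  by (induction \<phi>) auto

lemma
  assumes "finite A"
  shows set_list_of: "set (list_of A) = A" and distinct_list_of: "distinct (list_of A)"
  using someI_ex[OF finite_distinct_list[OF assms]] unfolding list_of_def by auto

lemma peval_exactly_one: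
  "peval \<alpha> (exactly_one fs) \<longleftrightarrow> (\<exists>f\<in>set fs. peval \<alpha> f) \<and>
     (\<forall>j k. j < k \<and> k < length fs \<longrightarrow> \<not> (peval \<alpha> (fs ! j) \<and> peval \<alpha> (fs ! k)))"
  by (auto simp: exactly_one_def)

lemma distinct_nth_pairwise_iff:
  assumes "distinct xs"
  shows "(\<forall>j k. j < k \<and> k < length xs \<longrightarrow> Q (xs ! j) \<longrightarrow> \<not> Q (xs ! k))
    \<longleftrightarrow> (\<forall>x\<in>set xs. \<forall>y\<in>set xs. Q x \<and> Q y \<longrightarrow> x = y)"
proof
  assume pairs: "\<forall>j k. j < k \<and> k < length xs \<longrightarrow> Q (xs ! j) \<longrightarrow> \<not> Q (xs ! k)"
  show "\<forall>x\<in>set xs. \<forall>y\<in>set xs. Q x \<and> Q y \<longrightarrow> x = y"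
  proof (intro ballI impI)
    fix x y assume "x \<in> set xs" "y \<in> set xs" and xy: "Q x \<and> Q y"
    then obtain j k where "j < length xs" "k < length xs" "xs ! j = x" "xs ! k = y"
      by (meson in_set_conv_nth)
    with pairs xy show "x = y"
      by (metis linorder_neqE_nat)
  qed
next
  assume "\<forall>x\<in>set xs. \<forall>y\<in>set xs. Q x \<and> Q y \<longrightarrow> x = y"
  then show "\<forall>j k. j < k \<and> k < length xs \<longrightarrow> Q (xs ! j) \<longrightarrow> \<not> Q (xs ! k)"
    using assms by (metis nth_mem nth_eq_iff_index_eq less_trans less_irrefl)
qed

lemma peval_exactly_one_map:
  assumes "distinct xs"
  shows "peval \<alpha> (exactly_one (map f xs)) \<longleftrightarrow> (\<exists>!x. x \<in> set xs \<and> peval \<alpha> (f x))"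
proof -
  have "(\<exists>!x. x \<in> set xs \<and> peval \<alpha> (f x)) \<longleftrightarrow> (\<exists>x\<in>set xs. peval \<alpha> (f x)) \<and>
      (\<forall>x\<in>set xs. \<forall>y\<in>set xs. peval \<alpha> (f x) \<and> peval \<alpha> (f y) \<longrightarrow> x = y)"
    by blast
  then show ?thesis
    by (simp add: peval_exactly_one distinct_nth_pairwise_iff[OF assms, where Q = "\<lambda>x. peval \<alpha> (f x)"])
qed

lemma allowed_tuples_subset_Sigma: "\<tau> \<in> allowed_tuples P d phi t \<Longrightarrow> \<tau> \<subseteq> Sigma P d"
  and finite_member_allowed_tuples: "\<tau> \<in> allowed_tuples P d phi t \<Longrightarrow> finite \<tau>"
  by (auto simp: allowed_tuples_def t_tuple_def)

lemma finite_allowed_tuples: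
  assumes "sut_model P d phi"
  shows "finite (allowed_tuples P d phi t)"
proof (rule finite_subset)
  show "allowed_tuples P d phi t \<subseteq> Pow (Sigma P d)"
    using allowed_tuples_subset_Sigma by blast
  show "finite (Pow (Sigma P d))"
    using assms by (auto simp: sut_model_def)
qed

lemma peval_Sat_CX:
  assumes "sut_model P d phi"
  shows "peval \<alpha> (Sat_CX N t P d phi) \<longleftrightarrow>
      (\<forall>i\<in>{1..N}. \<forall>p\<in>P. \<exists>!v. v \<in> d p \<and> \<alpha> (X i p v)) \<and>
      (\<forall>\<tau>\<in>allowed_tuples P d phi t. \<exists>i\<in>{1..N}. \<alpha> (C i \<tau>)) \<and>
      (\<forall>i\<in>{1..N}. \<forall>\<tau>\<in>allowed_tuples P d phi t. \<alpha> (C i \<tau>) \<longrightarrow> (\<forall>(p, v)\<in>\<tau>. \<alpha> (X i p v))) \<and>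
      (\<forall>i\<in>{1..N}. peval (\<lambda>(p, v). \<alpha> (X i p v)) phi)"
proof -
  have "finite P" and "\<And>p. p \<in> P \<Longrightarrow> finite (d p)"
    using assms by (auto simp: sut_model_def)
  then have "set (list_of P) = P"
    and "\<And>p. p \<in> P \<Longrightarrow> peval \<alpha> (exactly_one [Atom (X i p v). v \<leftarrow> list_of (d p)])
                          \<longleftrightarrow> (\<exists>!v. v \<in> d p \<and> \<alpha> (X i p v))" for i
    by (simp_all add: set_list_of distinct_list_of peval_exactly_one_map)
  moreover have "set (list_of (allowed_tuples P d phi t)) = allowed_tuples P d phi t"
    using finite_allowed_tuples[OF assms] by (rule set_list_of)
  moreover have "\<And>\<tau>. \<tau> \<in> allowed_tuples P d phi t \<Longrightarrow> set (list_of \<tau>) = \<tau>"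
    using finite_member_allowed_tuples set_list_of by blast
  moreover have "set [1..<Suc N] = {1..N}"
    by auto
  ultimately show ?thesis
    unfolding Sat_CX_def Let_def by (simp add: peval_map_pform comp_def split_def del: upt_Suc set_upt)
qed

lemma test_case_iff_peval:
  assumes "sut_model P d phi"
    and "\<forall>p\<in>P. A p \<in> d p"
    and "\<And>p v. p \<in> P \<Longrightarrow> v \<in> d p \<Longrightarrow> A p = v \<longleftrightarrow> \<beta> (p, v)"
  shows "test_case P d phi A \<longleftrightarrow> peval \<beta> phi"
proof -
  have "peval (\<lambda>(p, v). A p = v) phi = peval \<beta> phi"
  proof (rule peval_cong)
    fix a assume "a \<in> set_pform phi"
    then have "a \<in> Sigma P d"
      using assms(1) by (auto simp: sut_model_def)
    then show "(case a of (p, v) \<Rightarrow> A p = v) = \<beta> a"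
      using assms(3) by auto
  qed
  then show ?thesis
    using assms(2) by (simp add: test_case_def)
qed

definition decoded_test :: "(('p, 'v) cvar \<Rightarrow> bool) \<Rightarrow> ('p \<Rightarrow> 'v set) \<Rightarrow> nat \<Rightarrow> 'p \<Rightarrow> 'v" where
  "decoded_test \<alpha> d i p = (THE v. v \<in> d p \<and> \<alpha> (X i p v))"

lemma decoded_test_eq_iff:
  assumes "\<exists>!v. v \<in> d p \<and> \<alpha> (X i p v)" and "v \<in> d p"
  shows "decoded_test \<alpha> d i p = v \<longleftrightarrow> \<alpha> (X i p v)"
  using assms theI'[OF assms(1)] unfolding decoded_test_def by blast

lemma decoded_test_in_domain:
  assumes "\<exists>!v. v \<in> d p \<and> \<alpha> (X i p v)"
  shows "decoded_test \<alpha> d i p \<in> d p"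
  using theI'[OF assms] unfolding decoded_test_def by blast

lemma covering_array_decoded_test:
  assumes S: "sut_model P d phi" and sat: "peval \<alpha> (Sat_CX N t P d phi)"
  shows "covering_array N t P d phi (map (decoded_test \<alpha> d) [1..<Suc N])"
proof -
  have unique: "\<forall>i\<in>{1..N}. \<forall>p\<in>P. \<exists>!v. v \<in> d p \<and> \<alpha> (X i p v)"
    and covered: "\<forall>\<tau>\<in>allowed_tuples P d phi t. \<exists>i\<in>{1..N}. \<alpha> (C i \<tau>)"
    and consistent: "\<forall>i\<in>{1..N}. \<forall>\<tau>\<in>allowed_tuples P d phi t. \<alpha> (C i \<tau>) \<longrightarrow> (\<forall>(p, v)\<in>\<tau>. \<alpha> (X i p v))"
    and constraint: "\<forall>i\<in>{1..N}. peval (\<lambda>(p, v). \<alpha> (X i p v)) phi"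
    using sat unfolding peval_Sat_CX[OF S] by simp_all
  have test_case: "test_case P d phi (decoded_test \<alpha> d i)" if i: "i \<in> {1..N}" for i
  proof (subst test_case_iff_peval[OF S])
    show "\<forall>p\<in>P. decoded_test \<alpha> d i p \<in> d p"
      using unique[rule_format, OF i] by (simp add: decoded_test_in_domain)
    show "decoded_test \<alpha> d i p = v \<longleftrightarrow> (\<lambda>(p, v). \<alpha> (X i p v)) (p, v)" if "p \<in> P" "v \<in> d p" for p v
      using unique[rule_format, OF i that(1)] that(2) by (simp add: decoded_test_eq_iff)
    show "peval (\<lambda>(p, v). \<alpha> (X i p v)) phi"
      using constraint[rule_format, OF i] .
  qed
  have "\<exists>i\<in>{1..N}. covers (decoded_test \<alpha> d i) \<tau>" if \<tau>: "\<tau> \<in> allowed_tuples P d phi t" for \<tau>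
  proof -
    obtain i where i: "i \<in> {1..N}" "\<alpha> (C i \<tau>)"
      using covered[rule_format, OF \<tau>] by blast
    have "decoded_test \<alpha> d i p = v" if pv: "(p, v) \<in> \<tau>" for p v
    proof -
      have "p \<in> P" "v \<in> d p"
        using allowed_tuples_subset_Sigma[OF \<tau>] pv by auto
      moreover have "\<alpha> (X i p v)"
        using consistent[rule_format, OF i(1) \<tau> i(2)] pv by blast
      ultimately show ?thesis
        using unique[rule_format, OF i(1)] by (simp add: decoded_test_eq_iff)
    qed
    then have "covers (decoded_test \<alpha> d i) \<tau>"
      by (auto simp: covers_def)
    with i show ?thesis
      by blast
  qed
  moreover have "set [1..<Suc N] = {1..N}"
    by auto
  ultimately show ?thesis
    using test_case by (auto simp: covering_array_def)
qed

definition array_assignment :: "('p \<Rightarrow> 'v) list \<Rightarrow> ('p, 'v) cvar \<Rightarrow> bool" where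
  "array_assignment As x = (case x of
      X i p v \<Rightarrow> (As ! (i - 1)) p = v
    | C i \<tau> \<Rightarrow> covers (As ! (i - 1)) \<tau>)"

lemma peval_Sat_CX_array_assignment:
  assumes S: "sut_model P d phi" and ca: "covering_array N t P d phi As"
  shows "peval (array_assignment As) (Sat_CX N t P d phi)"
proof -
  have len: "length As = N" and tests: "\<And>A. A \<in> set As \<Longrightarrow> test_case P d phi A"
    and cov: "\<And>\<tau>. \<tau> \<in> allowed_tuples P d phi t \<Longrightarrow> \<exists>A\<in>set As. covers A \<tau>"
    using ca by (auto simp: covering_array_def)
  have row: "test_case P d phi (As ! (i - 1))" if "i \<in> {1..N}" for i
    using that len by (intro tests) auto
  have unique: "\<exists>!v. v \<in> d p \<and> array_assignment As (X i p v)" if "i \<in> {1..N}" "p \<in> P" for i p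
    using row[OF that(1)] that(2) by (auto simp: array_assignment_def test_case_def)
  have covered: "\<exists>i\<in>{1..N}. array_assignment As (C i \<tau>)"
    if "\<tau> \<in> allowed_tuples P d phi t" for \<tau>
  proof -
    from cov[OF that] len obtain k where "k < N" "covers (As ! k) \<tau>"
      by (auto simp: in_set_conv_nth)
    then show ?thesis
      by (intro bexI[of _ "Suc k"]) (auto simp: array_assignment_def)
  qed
  have consistent: "array_assignment As (C i \<tau>) \<longrightarrow> (\<forall>(p, v)\<in>\<tau>. array_assignment As (X i p v))"
    for i \<tau>
    by (auto simp: array_assignment_def covers_def)
  have constraint: "peval (\<lambda>(p, v). array_assignment As (X i p v)) phi" if "i \<in> {1..N}" for i
    using row[OF that] by (simp add: array_assignment_def test_case_def)
  show ?thesis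
    unfolding peval_Sat_CX[OF S]
    using unique covered consistent constraint by (intro conjI ballI) blast+
qed

theorem proposition1:
  fixes P :: "'p set" and d :: "'p \<Rightarrow> 'v set" and phi :: "('p \<times> 'v) pform"
    and t N :: nat
  assumes "sut_model P d phi"
    and "\<exists>A. test_case P d phi A"
    and "1 \<le> t" and "t \<le> card P"
    and "1 \<le> N"
  shows "satisfiable (Sat_CX N t P d phi) \<longleftrightarrow> (\<exists>As. covering_array N t P d phi As)"
  using covering_array_decoded_test[OF assms(1)] peval_Sat_CX_array_assignment[OF assms(1)]
  unfolding satisfiable_def by blast

end
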